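(* Let $\mathcal{B}$ be a pivotal bicategory, let $a,b,c,d$ be objects, and let $X\in\mathcal{B}(a,b)$ and $Y\in\mathcal{B}(c,d)$ have invertible left quantum dimensions. Then every $Z\in\mathcal{B}(a,c)$ is a retract of $Y^\dagger\otimes F\otimes X$ for some $F\in\mathcal{B}(b,d)$ (depending on $Z$), i.e. there are 2-morphisms $e:Z\to Y^\dagger\otimes F\otimes X$ and $r:Y^\dagger\otimes F\otimes X\to Z$ with $r\circ e=1_Z$.
   Context: In a bicategory $\mathcal{B}$, $I_a$ is the unit 1-morphism of $a$ and $Y\otimes X\in\mathcal{B}(a,c)$ the composite of $X\in\mathcal{B}(a,b)$, $Y\in\mathcal{B}(b,c)$. $\mathcal{B}$ has left adjoints if each $X\in\mathcal{B}(a,b)$ has $X^\dagger\in\mathcal{B}(b,a)$ with $\mathrm{ev}_X:X^\dagger\otimes X\to I_a$, $\mathrm{coev}_X:I_b\to X\otimes X^\dagger$ the counit and unit of an adjunction; it is pivotal if there are natural isomorphisms $\delta:\mathrm{Id}\Rightarrow(-)^{\dagger\dagger}$ on each $\mathcal{B}(a,b)$ compatible with $\otimes$. Set $\widetilde{\mathrm{coev}}_X=(1_{X^\dagger}\otimes\delta_X^{-1})\circ\mathrm{coev}_{X^\dagger}:I_a\to X^\dagger\otimes X$. The left quantum dimension of $X\in\mathcal{B}(a,b)$ is $\dim_{\mathrm{l}}(X)=\mathrm{ev}_X\circ\widetilde{\mathrm{coev}}_X\in\operatorname{End}(I_a)$. *)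

theory Defs
  imports Main
begin

text \<open>Conventions: a 1-morphism X has source src X and target trg X
(X in B(a,b) means src X = a, trg X = b).  The composite of X in B(a,b)
and Y in B(b,c) is hc Y X = Y \<otimes> X in B(a,c).  2-morphisms f have
domain dom f and codomain cod f; vc g f is the vertical composite g \<circ> f,
hcc g f the horizontal composite g \<otimes> f.  assoc Z Y X is the associator
(Z\<otimes>Y)\<otimes>X \<Rightarrow> Z\<otimes>(Y\<otimes>X), lu X : I_b \<otimes> X \<Rightarrow> X and
ru X : X \<otimes> I_a \<Rightarrow> X are the unitors.\<close>

record ('o, 'm, 't) bicat =
  Ob :: "'o set"
  Mor :: "'m set"
  src :: "'m \<Rightarrow> 'o"
  trg :: "'m \<Rightarrow> 'o"
  Cell :: "'t set"
  dom :: "'t \<Rightarrow> 'm"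
  cod :: "'t \<Rightarrow> 'm"
  vc :: "'t \<Rightarrow> 't \<Rightarrow> 't"
  idc :: "'m \<Rightarrow> 't"
  hc :: "'m \<Rightarrow> 'm \<Rightarrow> 'm"
  hcc :: "'t \<Rightarrow> 't \<Rightarrow> 't"
  unit :: "'o \<Rightarrow> 'm"
  assoc :: "'m \<Rightarrow> 'm \<Rightarrow> 'm \<Rightarrow> 't"
  lu :: "'m \<Rightarrow> 't"
  ru :: "'m \<Rightarrow> 't"

definition hom :: "('o, 'm, 't, 'z) bicat_scheme \<Rightarrow> 'o \<Rightarrow> 'o \<Rightarrow> 'm set" where
  "hom B a b = {X \<in> Mor B. src B X = a \<and> trg B X = b}"

definition cell :: "('o, 'm, 't, 'z) bicat_scheme \<Rightarrow> 'm \<Rightarrow> 'm \<Rightarrow> 't set" where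
  "cell B X Y = {f \<in> Cell B. dom B f = X \<and> cod B f = Y}"

definition iso :: "('o, 'm, 't, 'z) bicat_scheme \<Rightarrow> 't \<Rightarrow> bool" where
  "iso B f \<longleftrightarrow> f \<in> Cell B \<and>
     (\<exists>g \<in> cell B (cod B f) (dom B f).
        vc B g f = idc B (dom B f) \<and> vc B f g = idc B (cod B f))"

definition inv :: "('o, 'm, 't, 'z) bicat_scheme \<Rightarrow> 't \<Rightarrow> 't" where
  "inv B f = (THE g. g \<in> cell B (cod B f) (dom B f) \<and>
        vc B g f = idc B (dom B f) \<and> vc B f g = idc B (cod B f))"

locale bicategory =
  fixes B :: "('o, 'm, 't, 'z) bicat_scheme"
  assumes src_trg_Ob: "X \<in> Mor B \<Longrightarrow> src B X \<in> Ob B \<and> trg B X \<in> Ob B"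
    and dom_cod: "f \<in> Cell B \<Longrightarrow> dom B f \<in> Mor B \<and> cod B f \<in> Mor B \<and>
          src B (dom B f) = src B (cod B f) \<and> trg B (dom B f) = trg B (cod B f)"
    and idc_cell: "X \<in> Mor B \<Longrightarrow> idc B X \<in> cell B X X"
    and vc_cell: "\<lbrakk>f \<in> cell B X Y; g \<in> cell B Y Z\<rbrakk> \<Longrightarrow> vc B g f \<in> cell B X Z"
    and vc_idl: "f \<in> Cell B \<Longrightarrow> vc B (idc B (cod B f)) f = f"
    and vc_idr: "f \<in> Cell B \<Longrightarrow> vc B f (idc B (dom B f)) = f"
    and vc_assoc: "\<lbrakk>f \<in> cell B W X; g \<in> cell B X Y; h \<in> cell B Y Z\<rbrakk> \<Longrightarrow>
          vc B h (vc B g f) = vc B (vc B h g) f"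
    and unit_hom: "a \<in> Ob B \<Longrightarrow> unit B a \<in> hom B a a"
    and hc_hom: "\<lbrakk>X \<in> hom B a b; Y \<in> hom B b c\<rbrakk> \<Longrightarrow> hc B Y X \<in> hom B a c"
    and hcc_cell: "\<lbrakk>f \<in> cell B X X'; g \<in> cell B Y Y'; src B Y = trg B X\<rbrakk> \<Longrightarrow>
          hcc B g f \<in> cell B (hc B Y X) (hc B Y' X')"
    and hcc_id: "\<lbrakk>X \<in> Mor B; Y \<in> Mor B; src B Y = trg B X\<rbrakk> \<Longrightarrow>
          hcc B (idc B Y) (idc B X) = idc B (hc B Y X)"
    and interchange: "\<lbrakk>f \<in> cell B X X'; f' \<in> cell B X' X''; g \<in> cell B Y Y';
          g' \<in> cell B Y' Y''; src B Y = trg B X\<rbrakk> \<Longrightarrow>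
          hcc B (vc B g' g) (vc B f' f) = vc B (hcc B g' f') (hcc B g f)"
    and assoc_cell: "\<lbrakk>X \<in> Mor B; Y \<in> Mor B; Z \<in> Mor B; src B Y = trg B X; src B Z = trg B Y\<rbrakk>
          \<Longrightarrow> assoc B Z Y X \<in> cell B (hc B (hc B Z Y) X) (hc B Z (hc B Y X))
              \<and> iso B (assoc B Z Y X)"
    and assoc_nat: "\<lbrakk>f \<in> cell B X X'; g \<in> cell B Y Y'; h \<in> cell B Z Z';
          src B Y = trg B X; src B Z = trg B Y\<rbrakk> \<Longrightarrow>
          vc B (hcc B h (hcc B g f)) (assoc B Z Y X) = vc B (assoc B Z' Y' X') (hcc B (hcc B h g) f)"
    and lu_cell: "X \<in> Mor B \<Longrightarrow> lu B X \<in> cell B (hc B (unit B (trg B X)) X) X \<and> iso B (lu B X)"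
    and ru_cell: "X \<in> Mor B \<Longrightarrow> ru B X \<in> cell B (hc B X (unit B (src B X))) X \<and> iso B (ru B X)"
    and lu_nat: "f \<in> cell B X X' \<Longrightarrow>
          vc B f (lu B X) = vc B (lu B X') (hcc B (idc B (unit B (trg B X))) f)"
    and ru_nat: "f \<in> cell B X X' \<Longrightarrow>
          vc B f (ru B X) = vc B (ru B X') (hcc B f (idc B (unit B (src B X))))"
    and pentagon: "\<lbrakk>X \<in> Mor B; Y \<in> Mor B; Z \<in> Mor B; W \<in> Mor B;
          src B Y = trg B X; src B Z = trg B Y; src B W = trg B Z\<rbrakk> \<Longrightarrow>
          vc B (assoc B W Z (hc B Y X)) (assoc B (hc B W Z) Y X) =
          vc B (hcc B (idc B W) (assoc B Z Y X))
             (vc B (assoc B W (hc B Z Y) X) (hcc B (assoc B W Z Y) (idc B X)))"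
    and triangle: "\<lbrakk>X \<in> Mor B; Y \<in> Mor B; src B Y = trg B X\<rbrakk> \<Longrightarrow>
          vc B (hcc B (idc B Y) (lu B X)) (assoc B Y (unit B (trg B X)) X) =
          hcc B (ru B Y) (idc B X)"

text \<open>dag X = X\<dagger>, ev X : X\<dagger> \<otimes> X \<Rightarrow> I_a, coev X : I_b \<Rightarrow> X \<otimes> X\<dagger> for X in B(a,b);
piv X = \<delta>_X : X \<Rightarrow> X\<dagger>\<dagger>.\<close>

record ('o, 'm, 't) pivbicat = "('o, 'm, 't) bicat" +
  dag :: "'m \<Rightarrow> 'm"
  ev :: "'m \<Rightarrow> 't"
  coev :: "'m \<Rightarrow> 't"
  piv :: "'m \<Rightarrow> 't"

text \<open>Mate of g : A \<otimes> W \<Rightarrow> I_{src W}, giving A \<Rightarrow> W\<dagger>: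
A \<Rightarrow> A\<otimes>I \<Rightarrow> A\<otimes>(W\<otimes>W\<dagger>) \<Rightarrow> (A\<otimes>W)\<otimes>W\<dagger> \<Rightarrow> I\<otimes>W\<dagger> \<Rightarrow> W\<dagger>.\<close>
definition mate :: "('o, 'm, 't, 'z) pivbicat_scheme \<Rightarrow> 'm \<Rightarrow> 'm \<Rightarrow> 't \<Rightarrow> 't" where
  "mate B A W g =
     vc B (lu B (dag B W))
      (vc B (hcc B g (idc B (dag B W)))
        (vc B (inv B (assoc B A W (dag B W)))
          (vc B (hcc B (idc B A) (coev B W)) (inv B (ru B A)))))"

text \<open>The action of (-)\<dagger> on a 2-morphism f : X \<Rightarrow> Y, giving f\<dagger> : Y\<dagger> \<Rightarrow> X\<dagger>.\<close>
definition dagc :: "('o, 'm, 't, 'z) pivbicat_scheme \<Rightarrow> 't \<Rightarrow> 't" where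
  "dagc B f = mate B (dag B (cod B f)) (dom B f)
                (vc B (ev B (cod B f)) (hcc B (idc B (dag B (cod B f))) f))"

definition ev2 :: "('o, 'm, 't, 'z) pivbicat_scheme \<Rightarrow> 'm \<Rightarrow> 'm \<Rightarrow> 't" where
  "ev2 B Y X =
     vc B (ev B X)
      (vc B (hcc B (ru B (dag B X)) (idc B X))
        (vc B (hcc B (hcc B (idc B (dag B X)) (ev B Y)) (idc B X))
          (vc B (hcc B (assoc B (dag B X) (dag B Y) Y) (idc B X))
            (inv B (assoc B (hc B (dag B X) (dag B Y)) Y X)))))"

text \<open>Canonical isomorphism \<phi>_{Y,X} : X\<dagger> \<otimes> Y\<dagger> \<Rightarrow> (Y \<otimes> X)\<dagger>.\<close>
definition phi :: "('o, 'm, 't, 'z) pivbicat_scheme \<Rightarrow> 'm \<Rightarrow> 'm \<Rightarrow> 't" where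
  "phi B Y X = mate B (hc B (dag B X) (dag B Y)) (hc B Y X) (ev2 B Y X)"

text \<open>Canonical isomorphism \<gamma>_{Y,X} : Y\<dagger>\<dagger> \<otimes> X\<dagger>\<dagger> \<Rightarrow> (Y \<otimes> X)\<dagger>\<dagger>.\<close>
definition gam :: "('o, 'm, 't, 'z) pivbicat_scheme \<Rightarrow> 'm \<Rightarrow> 'm \<Rightarrow> 't" where
  "gam B Y X = vc B (inv B (dagc B (phi B Y X))) (phi B (dag B X) (dag B Y))"

locale left_adjoints = bicategory B
  for B :: "('o, 'm, 't, 'z) pivbicat_scheme" +
  assumes dag_hom: "X \<in> hom B a b \<Longrightarrow> dag B X \<in> hom B b a"
    and ev_cell: "X \<in> Mor B \<Longrightarrow> ev B X \<in> cell B (hc B (dag B X) X) (unit B (src B X))"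
    and coev_cell: "X \<in> Mor B \<Longrightarrow> coev B X \<in> cell B (unit B (trg B X)) (hc B X (dag B X))"
    and zigzag1: "X \<in> Mor B \<Longrightarrow>
          vc B (ru B X)
           (vc B (hcc B (idc B X) (ev B X))
             (vc B (assoc B X (dag B X) X)
               (vc B (hcc B (coev B X) (idc B X)) (inv B (lu B X))))) = idc B X"
    and zigzag2: "X \<in> Mor B \<Longrightarrow>
          vc B (lu B (dag B X))
           (vc B (hcc B (ev B X) (idc B (dag B X)))
             (vc B (inv B (assoc B (dag B X) X (dag B X)))
               (vc B (hcc B (idc B (dag B X)) (coev B X)) (inv B (ru B (dag B X)))))) =
          idc B (dag B X)"

locale pivotal_bicategory = left_adjoints B
  for B :: "('o, 'm, 't, 'z) pivbicat_scheme" +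
  assumes piv_cell: "X \<in> Mor B \<Longrightarrow> piv B X \<in> cell B X (dag B (dag B X)) \<and> iso B (piv B X)"
    and piv_nat: "f \<in> Cell B \<Longrightarrow>
          vc B (piv B (cod B f)) f = vc B (dagc B (dagc B f)) (piv B (dom B f))"
    and piv_hc: "\<lbrakk>X \<in> Mor B; Y \<in> Mor B; src B Y = trg B X\<rbrakk> \<Longrightarrow>
          piv B (hc B Y X) = vc B (gam B Y X) (hcc B (piv B Y) (piv B X))"

definition coev_tilde :: "('o, 'm, 't, 'z) pivbicat_scheme \<Rightarrow> 'm \<Rightarrow> 't" where
  "coev_tilde B X = vc B (hcc B (idc B (dag B X)) (inv B (piv B X))) (coev B (dag B X))"

definition dim_l :: "('o, 'm, 't, 'z) pivbicat_scheme \<Rightarrow> 'm \<Rightarrow> 't" where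
  "dim_l B X = vc B (ev B X) (coev_tilde B X)"

end

theory Submission
  imports Defs
begin

text \<open>The 2-morphisms \<open>coev_tilde X : I\<^sub>a \<Rightarrow> X\<dagger> \<otimes> X\<close> and \<open>ev X : X\<dagger> \<otimes> X \<Rightarrow> I\<^sub>a\<close>
compose to \<open>dim_l X\<close>; when this is invertible, \<open>I\<^sub>a\<close> is a retract of \<open>X\<dagger> \<otimes> X\<close>. Retracts
are stable under horizontal composition, so \<open>Z \<cong> I\<^sub>c \<otimes> Z \<otimes> I\<^sub>a\<close> is a retract of
\<open>(Y\<dagger> \<otimes> Y) \<otimes> Z \<otimes> (X\<dagger> \<otimes> X)\<close>, which reassociates to \<open>Y\<dagger> \<otimes> F \<otimes> X\<close> with
\<open>F = Y \<otimes> Z \<otimes> X\<dagger>\<close>.\<close>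

context bicategory
begin

lemma cell_Mor:
  assumes "f \<in> cell B X Y"
  shows "X \<in> Mor B" and "Y \<in> Mor B" and "src B X = src B Y" and "trg B X = trg B Y"
  using assms dom_cod[of f] by (auto simp: cell_def)

lemma vc_idc_left: "f \<in> cell B X Y \<Longrightarrow> vc B (idc B Y) f = f"
  using vc_idl by (auto simp: cell_def)

lemma vc_idc_right: "f \<in> cell B X Y \<Longrightarrow> vc B f (idc B X) = f"
  using vc_idr by (auto simp: cell_def)

lemma Mor_hc [simp]: "\<lbrakk>X \<in> Mor B; Y \<in> Mor B; src B Y = trg B X\<rbrakk> \<Longrightarrow> hc B Y X \<in> Mor B"
  and src_hc [simp]: "\<lbrakk>X \<in> Mor B; Y \<in> Mor B; src B Y = trg B X\<rbrakk> \<Longrightarrow> src B (hc B Y X) = src B X"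
  and trg_hc [simp]: "\<lbrakk>X \<in> Mor B; Y \<in> Mor B; src B Y = trg B X\<rbrakk> \<Longrightarrow> trg B (hc B Y X) = trg B Y"
  using hc_hom[of X "src B X" "trg B X" Y "trg B Y"] by (auto simp: hom_def)

lemma Mor_unit [simp]: "a \<in> Ob B \<Longrightarrow> unit B a \<in> Mor B"
  and src_unit [simp]: "a \<in> Ob B \<Longrightarrow> src B (unit B a) = a"
  and trg_unit [simp]: "a \<in> Ob B \<Longrightarrow> trg B (unit B a) = a"
  using unit_hom[of a] by (auto simp: hom_def)

lemma inv_unique:
  assumes f: "f \<in> cell B X Y" and g: "g \<in> cell B Y X" and g': "g' \<in> cell B Y X"
    and left: "vc B g f = idc B X" and right: "vc B f g' = idc B Y"
  shows "g = g'"
proof -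
  have "g = vc B g (vc B f g')" using right vc_idc_right[OF g] by simp
  also have "\<dots> = vc B (vc B g f) g'" using vc_assoc[OF g' f g] .
  finally show ?thesis using left vc_idc_left[OF g'] by simp
qed

lemma inv_props:
  assumes "iso B f"
  shows "inv B f \<in> cell B (cod B f) (dom B f)"
    and "vc B (inv B f) f = idc B (dom B f)"
    and "vc B f (inv B f) = idc B (cod B f)"
proof -
  from assms have f: "f \<in> cell B (dom B f) (cod B f)"
    and "\<exists>g. g \<in> cell B (cod B f) (dom B f) \<and>
          vc B g f = idc B (dom B f) \<and> vc B f g = idc B (cod B f)"
    unfolding iso_def by (auto simp: cell_def)
  then have "\<exists>!g. g \<in> cell B (cod B f) (dom B f) \<and>
          vc B g f = idc B (dom B f) \<and> vc B f g = idc B (cod B f)"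
    using inv_unique[OF f] by blast
  from theI'[OF this] show "inv B f \<in> cell B (cod B f) (dom B f)"
    and "vc B (inv B f) f = idc B (dom B f)" and "vc B f (inv B f) = idc B (cod B f)"
    unfolding inv_def by blast+
qed

lemma isoI:
  assumes "f \<in> cell B X Y" and "g \<in> cell B Y X"
    and "vc B g f = idc B X" and "vc B f g = idc B Y"
  shows "iso B f"
  using assms unfolding iso_def cell_def by auto

lemma iso_inv_cell:
  assumes "f \<in> cell B X Y" and "iso B f"
  shows "inv B f \<in> cell B Y X" and "vc B (inv B f) f = idc B X" and "vc B f (inv B f) = idc B Y"
  using assms inv_props[of f] by (auto simp: cell_def)

lemma iso_inv:
  assumes "f \<in> cell B X Y" and "iso B f"
  shows "iso B (inv B f)"
  using isoI[OF iso_inv_cell(1)[OF assms] assms(1)] iso_inv_cell[OF assms] by simp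

lemma iso_idc: "X \<in> Mor B \<Longrightarrow> iso B (idc B X)"
  using isoI idc_cell vc_idc_left by metis

lemma iso_vc:
  assumes f: "f \<in> cell B X Y" "iso B f" and g: "g \<in> cell B Y Z" "iso B g"
  shows "iso B (vc B g f)"
proof (rule isoI)
  note f' = iso_inv_cell[OF f] and g' = iso_inv_cell[OF g]
  show gf: "vc B g f \<in> cell B X Z" by (rule vc_cell[OF f(1) g(1)])
  show h: "vc B (inv B f) (inv B g) \<in> cell B Z X" by (rule vc_cell[OF g'(1) f'(1)])
  have "vc B (inv B g) (vc B g f) = f"
    using vc_assoc[OF f(1) g(1) g'(1)] g'(2) vc_idc_left[OF f(1)] by simp
  then show "vc B (vc B (inv B f) (inv B g)) (vc B g f) = idc B X"
    using vc_assoc[OF gf g'(1) f'(1)] f'(2) by simp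
  have "vc B f (vc B (inv B f) (inv B g)) = inv B g"
    using vc_assoc[OF g'(1) f'(1) f(1)] f'(3) vc_idc_left[OF g'(1)] by simp
  then show "vc B (vc B g f) (vc B (inv B f) (inv B g)) = idc B Z"
    using vc_assoc[OF h f(1) g(1)] g'(3) by simp
qed

lemma iso_hcc:
  assumes f: "f \<in> cell B X X'" "iso B f" and g: "g \<in> cell B Y Y'" "iso B g"
    and s: "src B Y = trg B X"
  shows "iso B (hcc B g f)"
proof (rule isoI)
  note f' = iso_inv_cell[OF f] and g' = iso_inv_cell[OF g]
  have s': "src B Y' = trg B X'" using s cell_Mor[OF f(1)] cell_Mor[OF g(1)] by simp
  show "hcc B g f \<in> cell B (hc B Y X) (hc B Y' X')" by (rule hcc_cell[OF f(1) g(1) s])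
  show "hcc B (inv B g) (inv B f) \<in> cell B (hc B Y' X') (hc B Y X)"
    by (rule hcc_cell[OF f'(1) g'(1) s'])
  show "vc B (hcc B (inv B g) (inv B f)) (hcc B g f) = idc B (hc B Y X)"
    using interchange[OF f(1) f'(1) g(1) g'(1) s] f'(2) g'(2)
      hcc_id[OF cell_Mor(1)[OF f(1)] cell_Mor(1)[OF g(1)] s] by simp
  show "vc B (hcc B g f) (hcc B (inv B g) (inv B f)) = idc B (hc B Y' X')"
    using interchange[OF f'(1) f(1) g'(1) g(1) s'] f'(3) g'(3)
      hcc_id[OF cell_Mor(2)[OF f(1)] cell_Mor(2)[OF g(1)] s'] by simp
qed

definition isomorphic :: "'m \<Rightarrow> 'm \<Rightarrow> bool" where
  "isomorphic X Y \<longleftrightarrow> (\<exists>f \<in> cell B X Y. iso B f)"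

definition retract :: "'m \<Rightarrow> 'm \<Rightarrow> bool" where
  "retract Z W \<longleftrightarrow> (\<exists>e r. e \<in> cell B Z W \<and> r \<in> cell B W Z \<and> vc B r e = idc B Z)"

lemma isomorphicI: "\<lbrakk>f \<in> cell B X Y; iso B f\<rbrakk> \<Longrightarrow> isomorphic X Y"
  unfolding isomorphic_def by blast

lemma isomorphic_sym: "isomorphic X Y \<Longrightarrow> isomorphic Y X"
  unfolding isomorphic_def using iso_inv_cell(1) iso_inv by blast

lemma isomorphic_trans [trans]: "\<lbrakk>isomorphic X Y; isomorphic Y Z\<rbrakk> \<Longrightarrow> isomorphic X Z"
  unfolding isomorphic_def using vc_cell iso_vc by blast

lemma isomorphic_hc:
  assumes "isomorphic X X'" and "isomorphic Y Y'" and "src B Y = trg B X"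
  shows "isomorphic (hc B Y X) (hc B Y' X')"
  using assms hcc_cell iso_hcc unfolding isomorphic_def by blast

lemma isomorphic_hc_left:
  "\<lbrakk>isomorphic X X'; Y \<in> Mor B; src B Y = trg B X\<rbrakk> \<Longrightarrow> isomorphic (hc B Y X) (hc B Y X')"
  using isomorphic_hc isomorphicI[OF idc_cell iso_idc] by blast

lemma retract_refl: "Z \<in> Mor B \<Longrightarrow> retract Z Z"
  unfolding retract_def using idc_cell vc_idc_left by blast

lemma retract_trans [trans]:
  assumes "retract Z W" and "retract W V"
  shows "retract Z V"
proof -
  from assms obtain e r e' r' where e: "e \<in> cell B Z W" and r: "r \<in> cell B W Z"
    and e': "e' \<in> cell B W V" and r': "r' \<in> cell B V W"
    and re: "vc B r e = idc B Z" and re': "vc B r' e' = idc B W"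
    unfolding retract_def by blast
  have "vc B r' (vc B e' e) = e"
    using vc_assoc[OF e e' r'] re' vc_idc_left[OF e] by simp
  then have "vc B (vc B r r') (vc B e' e) = idc B Z"
    using vc_assoc[OF vc_cell[OF e e'] r' r] re by simp
  then show ?thesis
    unfolding retract_def using vc_cell[OF e e'] vc_cell[OF r' r] by blast
qed

lemma retract_if_isomorphic: "isomorphic Z W \<Longrightarrow> retract Z W"
  unfolding isomorphic_def retract_def using iso_inv_cell by blast

lemma retract_isomorphic_trans [trans]: "\<lbrakk>retract Z W; isomorphic W V\<rbrakk> \<Longrightarrow> retract Z V"
  using retract_trans retract_if_isomorphic by blast

lemma retractI_iso:
  assumes e: "e \<in> cell B Z W" and r: "r \<in> cell B W Z" and iso: "iso B (vc B r e)"
  shows "retract Z W"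
proof -
  note re = vc_cell[OF e r]
  have "vc B (vc B (inv B (vc B r e)) r) e = idc B Z"
    using vc_assoc[OF e r iso_inv_cell(1)[OF re iso]] iso_inv_cell(2)[OF re iso] by simp
  then show ?thesis
    unfolding retract_def using e vc_cell[OF r iso_inv_cell(1)[OF re iso]] by blast
qed

lemma retract_hc:
  assumes "retract Z W" and "retract Z' W'" and s: "src B Z' = trg B Z"
  shows "retract (hc B Z' Z) (hc B W' W)"
proof -
  from assms obtain e r e' r' where e: "e \<in> cell B Z W" and r: "r \<in> cell B W Z"
    and e': "e' \<in> cell B Z' W'" and r': "r' \<in> cell B W' Z'"
    and re: "vc B r e = idc B Z" and re': "vc B r' e' = idc B Z'"
    unfolding retract_def by blast
  have s': "src B W' = trg B W" using s cell_Mor[OF e] cell_Mor[OF e'] by simp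
  have "vc B (hcc B r' r) (hcc B e' e) = idc B (hc B Z' Z)"
    using interchange[OF e r e' r' s] re re' hcc_id[OF cell_Mor(1)[OF e] cell_Mor(1)[OF e'] s]
    by simp
  then show ?thesis
    unfolding retract_def using hcc_cell[OF e e' s] hcc_cell[OF r r' s'] by blast
qed

lemma isomorphic_assoc:
  "\<lbrakk>X \<in> Mor B; Y \<in> Mor B; Z \<in> Mor B; src B Y = trg B X; src B Z = trg B Y\<rbrakk>
   \<Longrightarrow> isomorphic (hc B (hc B Z Y) X) (hc B Z (hc B Y X))"
  using assoc_cell isomorphicI by blast

lemma isomorphic_lu: "X \<in> Mor B \<Longrightarrow> isomorphic (hc B (unit B (trg B X)) X) X"
  using lu_cell isomorphicI by blast

lemma isomorphic_ru: "X \<in> Mor B \<Longrightarrow> isomorphic (hc B X (unit B (src B X))) X"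
  using ru_cell isomorphicI by blast

end

context left_adjoints
begin

lemma Mor_dag [simp]: "X \<in> Mor B \<Longrightarrow> dag B X \<in> Mor B"
  and src_dag [simp]: "X \<in> Mor B \<Longrightarrow> src B (dag B X) = trg B X"
  and trg_dag [simp]: "X \<in> Mor B \<Longrightarrow> trg B (dag B X) = src B X"
  using dag_hom[of X "src B X" "trg B X"] by (auto simp: hom_def)

end

context pivotal_bicategory
begin

lemma coev_tilde_cell:
  assumes "X \<in> Mor B"
  shows "coev_tilde B X \<in> cell B (unit B (src B X)) (hc B (dag B X) X)"
proof -
  have "coev B (dag B X) \<in> cell B (unit B (src B X)) (hc B (dag B X) (dag B (dag B X)))"
    using coev_cell[of "dag B X"] assms by simp
  moreover have "hcc B (idc B (dag B X)) (inv B (piv B X))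
      \<in> cell B (hc B (dag B X) (dag B (dag B X))) (hc B (dag B X) X)"
  proof (rule hcc_cell)
    show "inv B (piv B X) \<in> cell B (dag B (dag B X)) X"
      using piv_cell[OF assms] by (blast intro: iso_inv_cell(1))
    show "idc B (dag B X) \<in> cell B (dag B X) (dag B X)" using assms by (simp add: idc_cell)
  qed (use assms in simp)
  ultimately show ?thesis unfolding coev_tilde_def by (rule vc_cell)
qed

lemma retract_unit_dag_hc:
  assumes "X \<in> Mor B" and "iso B (dim_l B X)"
  shows "retract (unit B (src B X)) (hc B (dag B X) X)"
  using retractI_iso[OF coev_tilde_cell ev_cell] assms by (simp add: dim_l_def)

end

theorem proposition2p3:
  fixes B :: "('o, 'm, 't, 'z) pivbicat_scheme"
  assumes "pivotal_bicategory B"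
    and "a \<in> Ob B" and "b \<in> Ob B" and "c \<in> Ob B" and "d \<in> Ob B"
    and "X \<in> hom B a b" and "Y \<in> hom B c d"
    and "iso B (dim_l B X)" and "iso B (dim_l B Y)"
  shows "\<forall>Z \<in> hom B a c. \<exists>F \<in> hom B b d. \<exists>e r.
           e \<in> cell B Z (hc B (dag B Y) (hc B F X)) \<and>
           r \<in> cell B (hc B (dag B Y) (hc B F X)) Z \<and>
           vc B r e = idc B Z"
proof
  fix Z assume "Z \<in> hom B a c"
  interpret pivotal_bicategory B by fact
  have X: "X \<in> Mor B" "src B X = a" "trg B X = b" using assms(6) by (simp_all add: hom_def)
  have Y: "Y \<in> Mor B" "src B Y = c" "trg B Y = d" using assms(7) by (simp_all add: hom_def)
  have Z: "Z \<in> Mor B" "src B Z = a" "trg B Z = c" using \<open>Z \<in> hom B a c\<close> by (simp_all add: hom_def)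
  note Mor = X Y Z assms(2-5)
  define F where "F = hc B Y (hc B Z (dag B X))"
  have "F \<in> hom B b d" using Mor by (simp add: F_def hom_def)
  have "isomorphic (hc B Z (unit B a)) Z" using Z isomorphic_ru[of Z] by simp
  then have "isomorphic (hc B (unit B c) (hc B Z (unit B a))) (hc B (unit B c) Z)"
    by (rule isomorphic_hc_left) (use Mor in simp_all)
  also have "isomorphic \<dots> Z"
    using Mor isomorphic_lu[of Z] by simp
  finally have "retract Z (hc B (unit B c) (hc B Z (unit B a)))"
    by (rule retract_if_isomorphic[OF isomorphic_sym])
  also have "retract \<dots> (hc B (hc B (dag B Y) Y) (hc B Z (hc B (dag B X) X)))"
    using Mor retract_unit_dag_hc[of X] retract_unit_dag_hc[of Y] assms(8,9)
    by (intro retract_hc retract_refl) simp_all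
  also have "isomorphic \<dots> (hc B (dag B Y) (hc B Y (hc B Z (hc B (dag B X) X))))"
    using Mor by (intro isomorphic_assoc) simp_all
  also have "isomorphic \<dots> (hc B (dag B Y) (hc B Y (hc B (hc B Z (dag B X)) X)))"
    by (rule isomorphic_hc_left[OF isomorphic_hc_left[OF isomorphic_sym[OF isomorphic_assoc]]])
      (use Mor in simp_all)
  also have "isomorphic \<dots> (hc B (dag B Y) (hc B F X))"
    unfolding F_def
    by (rule isomorphic_hc_left[OF isomorphic_sym[OF isomorphic_assoc]])
      (use Mor in simp_all)
  finally show "\<exists>F \<in> hom B b d. \<exists>e r. e \<in> cell B Z (hc B (dag B Y) (hc B F X)) \<and>
      r \<in> cell B (hc B (dag B Y) (hc B F X)) Z \<and> vc B r e = idc B Z"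
    using \<open>F \<in> hom B b d\<close> unfolding retract_def by blast
qed

end
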